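(* $\mathfrak{L}(\mathrm{rtNBVA}(2))\not\subseteq\bigcup_k\mathfrak{L}(\mathrm{rtDBVA}(k))$.
   Context: $\mathfrak{L}(A)$ denotes the class of languages recognized by machines of type $A$; the union ranges over $k\ge1$. A real-time deterministic blind vector automaton of dimension $k$ ($\mathrm{rtDBVA}(k)$) is a 6-tuple $(Q,\Sigma,\delta,q_0,Q_a,v)$ with finite state set $Q$, initial state $q_0$, accept states $Q_a$, initial row vector $v\in\mathbb{Q}^k$ (freely chosen), and $\delta:Q\times(\Sigma\cup\{\cent,\$\})\to Q\times S$, $S$ the set of $k\times k$ rational matrices; the input $w$ is read as $\cent w\$$ left to right, one symbol per step, and $\delta(q,\sigma)=(q',M)$ means that in state $q$ reading $\sigma$ the machine goes to $q'$ and multiplies its row vector on the right by $M$. The input is accepted iff after processing $\$$ the state is in $Q_a$ and the first vector entry equals $1$. A real-time nondeterministic blind vector automaton of dimension $k$ ($\mathrm{rtNBVA}(k)$) is defined the same way except that $\delta:Q\times(\Sigma\cup\{\cent,\$\})\to\mathcal{P}(Q\times S)$ (power set), each step choosing one pair from $\delta(q,\sigma)$; an input is accepted iff some computation path ends, after processing $\$$, in a state of $Q_a$ with first vector entry equal to $1$. *)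

theory Defs
  imports Complex_Main
begin

datatype 'a sym = Cent | Dollar | Sym 'a

text \<open>k x k rational matrices and row vectors, represented by functions; only
  indices below k are meaningful.\<close>
type_synonym matr = "nat \<Rightarrow> nat \<Rightarrow> rat"
type_synonym vect = "nat \<Rightarrow> rat"

definition vmul :: "nat \<Rightarrow> vect \<Rightarrow> matr \<Rightarrow> vect" where
  "vmul k v M = (\<lambda>j. \<Sum>i<k. v i * M i j)"

definition tape :: "'a list \<Rightarrow> 'a sym list" where
  "tape w = Cent # map Sym w @ [Dollar]"

definition tape_syms :: "'a set \<Rightarrow> 'a sym set" where
  "tape_syms \<Sigma> = insert Cent (insert Dollar (Sym ` \<Sigma>))"

fun drun :: "nat \<Rightarrow> (nat \<Rightarrow> 'a sym \<Rightarrow> nat \<times> matr) \<Rightarrow> nat \<times> vect \<Rightarrow> 'a sym list \<Rightarrow> nat \<times> vect" where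
  "drun k \<delta> c [] = c"
| "drun k \<delta> (q, v) (\<sigma> # xs) = drun k \<delta> (fst (\<delta> q \<sigma>), vmul k v (snd (\<delta> q \<sigma>))) xs"

definition is_dbva :: "'a set \<Rightarrow> nat \<Rightarrow> nat set \<Rightarrow> (nat \<Rightarrow> 'a sym \<Rightarrow> nat \<times> matr) \<Rightarrow> nat \<Rightarrow> nat set \<Rightarrow> bool" where
  "is_dbva \<Sigma> k Q \<delta> q0 Qa \<longleftrightarrow> 1 \<le> k \<and> finite Q \<and> q0 \<in> Q \<and> Qa \<subseteq> Q \<and>
     (\<forall>q\<in>Q. \<forall>\<sigma>\<in>tape_syms \<Sigma>. fst (\<delta> q \<sigma>) \<in> Q)"

definition dbva_accepts :: "nat \<Rightarrow> (nat \<Rightarrow> 'a sym \<Rightarrow> nat \<times> matr) \<Rightarrow> nat \<Rightarrow> nat set \<Rightarrow> vect \<Rightarrow> 'a list \<Rightarrow> bool" where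
  "dbva_accepts k \<delta> q0 Qa v w \<longleftrightarrow>
     (let c = drun k \<delta> (q0, v) (tape w) in fst c \<in> Qa \<and> snd c 0 = 1)"

definition dbva_lang :: "'a set \<Rightarrow> nat \<Rightarrow> 'a list set \<Rightarrow> bool" where
  "dbva_lang \<Sigma> k L \<longleftrightarrow> (\<exists>Q \<delta> q0 Qa v. is_dbva \<Sigma> k Q \<delta> q0 Qa \<and>
     L = {w \<in> lists \<Sigma>. dbva_accepts k \<delta> q0 Qa v w})"

inductive nrun :: "nat \<Rightarrow> (nat \<Rightarrow> 'a sym \<Rightarrow> (nat \<times> matr) set) \<Rightarrow> nat \<times> vect \<Rightarrow> 'a sym list \<Rightarrow> nat \<times> vect \<Rightarrow> bool"
  for k \<delta> where
  nrun_Nil: "nrun k \<delta> c [] c"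
| nrun_Cons: "(q', M) \<in> \<delta> q \<sigma> \<Longrightarrow> nrun k \<delta> (q', vmul k v M) xs c \<Longrightarrow> nrun k \<delta> (q, v) (\<sigma> # xs) c"

definition is_nbva :: "'a set \<Rightarrow> nat \<Rightarrow> nat set \<Rightarrow> (nat \<Rightarrow> 'a sym \<Rightarrow> (nat \<times> matr) set) \<Rightarrow> nat \<Rightarrow> nat set \<Rightarrow> bool" where
  "is_nbva \<Sigma> k Q \<delta> q0 Qa \<longleftrightarrow> 1 \<le> k \<and> finite Q \<and> q0 \<in> Q \<and> Qa \<subseteq> Q \<and>
     (\<forall>q\<in>Q. \<forall>\<sigma>\<in>tape_syms \<Sigma>. finite (\<delta> q \<sigma>) \<and> fst ` \<delta> q \<sigma> \<subseteq> Q)"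

definition nbva_accepts :: "nat \<Rightarrow> (nat \<Rightarrow> 'a sym \<Rightarrow> (nat \<times> matr) set) \<Rightarrow> nat \<Rightarrow> nat set \<Rightarrow> vect \<Rightarrow> 'a list \<Rightarrow> bool" where
  "nbva_accepts k \<delta> q0 Qa v w \<longleftrightarrow>
     (\<exists>q u. nrun k \<delta> (q0, v) (tape w) (q, u) \<and> q \<in> Qa \<and> u 0 = 1)"

definition nbva_lang :: "'a set \<Rightarrow> nat \<Rightarrow> 'a list set \<Rightarrow> bool" where
  "nbva_lang \<Sigma> k L \<longleftrightarrow> (\<exists>Q \<delta> q0 Qa v. is_nbva \<Sigma> k Q \<delta> q0 Qa \<and>
     L = {w \<in> lists \<Sigma>. nbva_accepts k \<delta> q0 Qa v w})"

end

theory Submission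
  imports Defs
begin

(*
  The witness is the language of words over {0, 1} with different numbers of 0s and 1s.

  A nondeterministic machine of dimension 2 keeps a row vector (x, 1), starting from (0, 1),
  and changes x by shear matrices. On the left end marker it guesses the majority letter a;
  afterwards it adds 1 or 0 (nondeterministically) for every a and -1 for every other letter,
  and it accepts if x = 1 at the right end marker. Such a run exists iff a is strictly in the
  majority.

  Suppose a deterministic machine of dimension k accepted the language. Among the prefixes
  cent 0^t, some k + 2 of them, t in T, lead to the same state s with vectors v_t. On the
  suffix 1^j dollar the final state does not depend on the vector and the first final entry is
  a linear functional C_j of it, so C_j v_t = 1 exactly for t \<noteq> j. But k + 2 points of
  Q^k are affinely dependent: sum c_t v_t = 0 and sum c_t = 0 with some c_j \<noteq> 0, and then
  0 = sum c_t (C_j v_t - 1) = c_j (C_j v_j - 1), a contradiction.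
*)

lemma exists_nontrivial_vanishing_combination:
  fixes f :: "'b \<Rightarrow> nat \<Rightarrow> 'a::field"
  assumes "finite T" "n < card T"
  shows "\<exists>c. (\<exists>t\<in>T. c t \<noteq> 0) \<and> (\<forall>i<n. (\<Sum>t\<in>T. c t * f t i) = 0)"
  using assms
proof (induction n arbitrary: T f)
  case 0
  then show ?case by (intro exI[of _ "\<lambda>_. 1"]) (auto simp: card_gt_0_iff)
next
  case (Suc n)
  show ?case
  proof (cases "\<forall>t\<in>T. f t n = 0")
    case True
    from Suc.IH[of T f] Suc.prems obtain c where "\<exists>t\<in>T. c t \<noteq> 0"
      and "\<forall>i<n. (\<Sum>t\<in>T. c t * f t i) = 0" by auto
    with True show ?thesis by (intro exI[of _ c]) (auto simp: less_Suc_eq)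
  next
    case False
    then obtain t0 where t0: "t0 \<in> T" "f t0 n \<noteq> 0" by auto
    define g where "g t i = f t i - f t n / f t0 n * f t0 i" for t i
    have "n < card (T - {t0})" using Suc.prems t0 by simp
    with Suc.IH[of "T - {t0}" g] Suc.prems obtain d where d: "\<exists>t\<in>T - {t0}. d t \<noteq> 0"
      "\<forall>i<n. (\<Sum>t\<in>T - {t0}. d t * g t i) = 0" by auto
    define c where "c = d(t0 := - (\<Sum>t\<in>T - {t0}. d t * f t n) / f t0 n)"
    have split: "(\<Sum>t\<in>T. c t * f t i) = c t0 * f t0 i + (\<Sum>t\<in>T - {t0}. d t * f t i)" for i
      using Suc.prems(1) t0(1) by (simp add: sum.remove c_def)
    have "(\<Sum>t\<in>T. c t * f t i) = 0" if "i < Suc n" for i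
    proof (cases "i = n")
      case True
      then show ?thesis using split[of i] t0(2) by (simp add: c_def)
    next
      case False
      then have "0 = (\<Sum>t\<in>T - {t0}. d t * g t i)" using d(2) that by simp
      also have "\<dots> = (\<Sum>t\<in>T - {t0}. d t * f t i) - (\<Sum>t\<in>T - {t0}. d t * f t n) / f t0 n * f t0 i"
        by (simp add: g_def right_diff_distrib sum_subtractf sum_distrib_right
            sum_divide_distrib mult.assoc)
      finally show ?thesis using split[of i] t0(2) by (simp add: c_def)
    qed
    moreover have "\<exists>t\<in>T. c t \<noteq> 0" using d(1) by (auto simp: c_def)
    ultimately show ?thesis by blast
  qed
qed

lemma card_le_of_isolating_functionals:
  fixes x :: "'b \<Rightarrow> nat \<Rightarrow> 'a::field"
  assumes "finite T"
    and isolating: "\<forall>s\<in>T. \<exists>C. \<forall>t\<in>T. (\<Sum>i<k. C i * x t i) = 1 \<longleftrightarrow> t \<noteq> s"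
  shows "card T \<le> k + 1"
proof (rule ccontr)
  assume "\<not> card T \<le> k + 1"
  \<comment> \<open>the extra coordinate 1 turns linear dependence into affine dependence\<close>
  define f where "f t i = (if i < k then x t i else 1)" for t i
  from exists_nontrivial_vanishing_combination[OF \<open>finite T\<close>, of "k + 1" f] \<open>\<not> card T \<le> k + 1\<close>
  obtain c s where s: "s \<in> T" "c s \<noteq> 0" and c: "\<forall>i<k + 1. (\<Sum>t\<in>T. c t * f t i) = 0"
    by auto
  from isolating s(1) obtain C where C: "\<forall>t\<in>T. (\<Sum>i<k. C i * x t i) = 1 \<longleftrightarrow> t \<noteq> s"
    by blast
  define \<phi> where "\<phi> t = (\<Sum>i<k. C i * x t i)" for t
  have \<phi>: "\<phi> t = 1 \<longleftrightarrow> t \<noteq> s" if "t \<in> T" for t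
    using C that unfolding \<phi>_def by blast
  have "(\<Sum>t\<in>T. c t * (\<phi> t - 1)) = (\<Sum>t\<in>T. \<Sum>i<k. C i * (c t * x t i)) - (\<Sum>t\<in>T. c t)"
    by (simp add: \<phi>_def right_diff_distrib sum_subtractf sum_distrib_left mult.left_commute)
  also have "\<dots> = (\<Sum>i<k. C i * (\<Sum>t\<in>T. c t * f t i)) - (\<Sum>t\<in>T. c t * f t k)"
    by (simp add: f_def sum_distrib_left sum.swap[of _ T])
  also have "\<dots> = 0" using c by simp
  finally have "(\<Sum>t\<in>T. c t * (\<phi> t - 1)) = 0" .
  moreover have "(\<Sum>t\<in>T. c t * (\<phi> t - 1)) = c s * (\<phi> s - 1) + (\<Sum>t\<in>T - {s}. c t * (\<phi> t - 1))"
    using \<open>finite T\<close> s(1) by (rule sum.remove)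
  moreover have "(\<Sum>t\<in>T - {s}. c t * (\<phi> t - 1)) = 0"
    by (intro sum.neutral) (simp add: \<phi>)
  ultimately show False using \<phi>[OF s(1)] s(2) by simp
qed

definition unit_vect :: "nat \<Rightarrow> vect" where
  "unit_vect i = (\<lambda>j. if j = i then 1 else 0)"

lemma vmul_unit_vect:
  assumes "i < k"
  shows "vmul k (unit_vect i) M j = M i j"
proof -
  have "vmul k (unit_vect i) M j = (\<Sum>l<k. if l = i then M l j else 0)"
    unfolding vmul_def unit_vect_def by (rule sum.cong) auto
  then show ?thesis using assms by simp
qed

lemma drun_append: "drun k \<delta> c (xs @ ys) = drun k \<delta> (drun k \<delta> c xs) ys"
  by (induction xs arbitrary: c) (auto split: prod.splits)

lemma fst_drun_vect_indep: "fst (drun k \<delta> (q, v) xs) = fst (drun k \<delta> (q, v') xs)"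
  by (induction xs arbitrary: q v v') auto

lemma snd_drun_linear:
  assumes "j < k"
  shows "snd (drun k \<delta> (q, v) xs) j = (\<Sum>i<k. v i * snd (drun k \<delta> (q, unit_vect i) xs) j)"
  using assms
proof (induction xs arbitrary: q v)
  case Nil
  then show ?case by (simp add: unit_vect_def if_distrib cong: if_cong)
next
  case (Cons \<sigma> xs)
  define q' where "q' = fst (\<delta> q \<sigma>)"
  define M where "M = snd (\<delta> q \<sigma>)"
  define D where "D l = snd (drun k \<delta> (q', unit_vect l) xs) j" for l
  have step: "snd (drun k \<delta> (q, u) (\<sigma> # xs)) j = (\<Sum>l<k. vmul k u M l * D l)" for u
    unfolding D_def using Cons.IH[OF Cons.prems, of q' "vmul k u M"] by (simp add: q'_def M_def)
  have "snd (drun k \<delta> (q, v) (\<sigma> # xs)) j = (\<Sum>l<k. \<Sum>i<k. v i * (M i l * D l))"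
    unfolding step vmul_def by (simp add: sum_distrib_right mult.assoc)
  also have "\<dots> = (\<Sum>i<k. \<Sum>l<k. v i * (M i l * D l))"
    by (rule sum.swap)
  also have "\<dots> = (\<Sum>i<k. v i * snd (drun k \<delta> (q, unit_vect i) (\<sigma> # xs)) j)"
    unfolding step by (simp add: vmul_unit_vect sum_distrib_left)
  finally show ?case .
qed

lemma drun_in_states:
  assumes "is_dbva \<Sigma> k Q \<delta> q0 Qa" "q \<in> Q" "set xs \<subseteq> tape_syms \<Sigma>"
  shows "fst (drun k \<delta> (q, v) xs) \<in> Q"
  using assms(2,3) by (induction xs arbitrary: q v) (use assms(1) in \<open>auto simp: is_dbva_def\<close>)

lemma dbva_fooling_set_card_le:
  assumes "1 \<le> k" "finite T"
    and same_state: "\<forall>t\<in>T. fst (drun k \<delta> c0 (u t)) = s"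
    and fooled: "\<forall>j\<in>T. \<exists>z. \<forall>t\<in>T.
      (fst (drun k \<delta> c0 (u t @ z)) \<in> Qa \<and> snd (drun k \<delta> c0 (u t @ z)) 0 = 1) \<longleftrightarrow> t \<noteq> j"
  shows "card T \<le> k + 1"
proof (cases "card T \<le> 1")
  case True
  then show ?thesis by simp
next
  case False
  define x where "x t = snd (drun k \<delta> c0 (u t))" for t
  have "\<exists>C. \<forall>t\<in>T. (\<Sum>i<k. C i * x t i) = 1 \<longleftrightarrow> t \<noteq> j" if "j \<in> T" for j
  proof -
    from fooled that obtain z where z: "\<forall>t\<in>T.
      (fst (drun k \<delta> c0 (u t @ z)) \<in> Qa \<and> snd (drun k \<delta> c0 (u t @ z)) 0 = 1) \<longleftrightarrow> t \<noteq> j"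
      by blast
    have "\<not> T \<subseteq> {j}" using False card_mono[of "{j}" T] by auto
    then obtain t' where t': "t' \<in> T" "t' \<noteq> j" by blast
    have run: "drun k \<delta> c0 (u t @ z) = drun k \<delta> (s, x t) z" if "t \<in> T" for t
    proof -
      have "drun k \<delta> c0 (u t) = (s, x t)" using same_state that by (simp add: x_def prod_eq_iff)
      then show ?thesis by (simp add: drun_append)
    qed
    define F where "F = fst (drun k \<delta> (s, x j) z)"
    have F: "fst (drun k \<delta> (s, x t) z) = F" for t
      unfolding F_def by (rule fst_drun_vect_indep)
    have "F \<in> Qa" using z t' run[OF t'(1)] F by auto
    define C where "C i = snd (drun k \<delta> (s, unit_vect i) z) 0" for i
    have "snd (drun k \<delta> (s, x t) z) 0 = (\<Sum>i<k. C i * x t i)" for t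
      using snd_drun_linear[of 0 k \<delta> s "x t" z] assms(1) by (simp add: C_def mult.commute)
    then show ?thesis
      using z run F \<open>F \<in> Qa\<close> by (intro exI[of _ C]) auto
  qed
  then show ?thesis
    using card_le_of_isolating_functionals[OF \<open>finite T\<close>] by blast
qed

lemma count_list_replicate: "count_list (replicate n x) y = (if x = y then n else 0)"
  by (induction n) auto

definition unequal_counts :: "nat list set" where
  "unequal_counts = {w \<in> lists {0, 1}. count_list w 0 \<noteq> count_list w 1}"

lemma not_dbva_lang_unequal_counts: "\<not> dbva_lang {0, 1} k unequal_counts"
proof
  assume "dbva_lang {0, 1} k unequal_counts"
  then obtain Q \<delta> q0 Qa v where A: "is_dbva {0, 1} k Q \<delta> q0 Qa"
    and L: "unequal_counts = {w \<in> lists {0, 1}. dbva_accepts k \<delta> q0 Qa v w}"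
    unfolding dbva_lang_def by blast
  define u where "u t = Cent # map Sym (replicate t (0::nat))" for t
  define z where "z j = map Sym (replicate j (1::nat)) @ [Dollar]" for j
  define st where "st t = fst (drun k \<delta> (q0, v) (u t))" for t
  have "range st \<subseteq> Q"
    using A by (auto simp: st_def u_def is_dbva_def tape_syms_def intro!: drun_in_states[OF A])
  with A have "finite (range st)" by (auto simp: is_dbva_def intro: finite_subset)
  then obtain s where "infinite (st -` {s})"
    using inf_img_fin_dom[of st UNIV] by auto
  then obtain T where T: "finite T" "card T = k + 2" "T \<subseteq> st -` {s}"
    using infinite_arbitrarily_large by blast
  have "card T \<le> k + 1"
  proof (rule dbva_fooling_set_card_le)
    show "1 \<le> k" using A by (simp add: is_dbva_def)
    show "\<forall>t\<in>T. fst (drun k \<delta> (q0, v) (u t)) = s" using T(3) by (auto simp: st_def)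
    have accepts: "dbva_accepts k \<delta> q0 Qa v (replicate t 0 @ replicate j 1) \<longleftrightarrow> t \<noteq> j"
      for t j :: nat
    proof -
      have "replicate t 0 @ replicate j 1 \<in> lists {0, 1}" by auto
      then have "replicate t 0 @ replicate j 1 \<in> unequal_counts
          \<longleftrightarrow> dbva_accepts k \<delta> q0 Qa v (replicate t 0 @ replicate j 1)"
        unfolding L by blast
      then show ?thesis by (auto simp: unequal_counts_def count_list_replicate)
    qed
    have "u t @ z j = tape (replicate t 0 @ replicate j 1)" for t j
      by (simp add: u_def z_def tape_def)
    with accepts have "(fst (drun k \<delta> (q0, v) (u t @ z j)) \<in> Qa
        \<and> snd (drun k \<delta> (q0, v) (u t @ z j)) 0 = 1) \<longleftrightarrow> t \<noteq> j" for t j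
      by (simp add: dbva_accepts_def Let_def)
    then show "\<forall>j\<in>T. \<exists>z. \<forall>t\<in>T. (fst (drun k \<delta> (q0, v) (u t @ z)) \<in> Qa
        \<and> snd (drun k \<delta> (q0, v) (u t @ z)) 0 = 1) \<longleftrightarrow> t \<noteq> j"
      by blast
  qed fact
  with T(2) show False by simp
qed

definition shear :: "rat \<Rightarrow> matr" where
  "shear x = (\<lambda>i j. if i = j then 1 else if i = 1 \<and> j = 0 then x else 0)"

lemma vmul_shear: "vmul 2 v (shear x) = (\<lambda>j. if j = 0 then v 0 + v 1 * x else if j = 1 then v 1 else 0)"
  by (auto simp: vmul_def shear_def numeral_2_eq_2)

lemma vmul_shear_shear: "vmul 2 (vmul 2 v (shear x)) (shear y) = vmul 2 v (shear (x + y))"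
  by (auto simp: vmul_shear algebra_simps)

lemma nrun_Nil_iff: "nrun k \<delta> c [] c' \<longleftrightarrow> c' = c"
  by (auto intro: nrun.intros elim: nrun.cases)

lemma nrun_Cons_iff:
  "nrun k \<delta> (q, v) (\<sigma> # xs) c \<longleftrightarrow> (\<exists>q' M. (q', M) \<in> \<delta> q \<sigma> \<and> nrun k \<delta> (q', vmul k v M) xs c)"
  by (blast intro: nrun.intros elim: nrun.cases)

lemma bex_Icc_add:
  fixes m l h :: int
  shows "(\<exists>d\<in>{l..h}. P (m + d)) \<longleftrightarrow> (\<exists>d\<in>{l + m..h + m}. P d)"
  unfolding image_add_atLeastAtMost[of m l h, symmetric] by blast

lemma bex_Icc_Un:
  fixes l h :: int
  assumes "l \<le> h"
  shows "((\<exists>d\<in>{l..h}. P d) \<or> (\<exists>d\<in>{l + 1..h + 1}. P d)) \<longleftrightarrow> (\<exists>d\<in>{l..h + 1}. P d)"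
proof
  assume "\<exists>d\<in>{l..h + 1}. P d"
  then obtain d where "d \<in> {l..h + 1}" "P d" ..
  with assms show "(\<exists>d\<in>{l..h}. P d) \<or> (\<exists>d\<in>{l + 1..h + 1}. P d)"
    by (cases "d \<le> h") auto
qed auto

definition tally :: "nat \<Rightarrow> nat \<Rightarrow> (nat \<times> matr) set" where
  "tally a c = (if c = a then {(a + 1, shear 1), (a + 1, shear 0)} else {(a + 1, shear (-1))})"

definition unequal_nbva :: "nat \<Rightarrow> nat sym \<Rightarrow> (nat \<times> matr) set" where
  "unequal_nbva q \<sigma> = (case \<sigma> of
      Cent \<Rightarrow> if q = 0 then {(1, shear 0), (2, shear 0)} else {}
    | Sym c \<Rightarrow> if q \<in> {1, 2} then tally (q - 1) c else {}
    | Dollar \<Rightarrow> if q \<in> {1, 2} then {(3, shear 0)} else {})"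

lemma nrun_tally:
  assumes "a \<in> {0, 1}"
  shows "nrun 2 unequal_nbva (Suc a, v) (map Sym w @ [Dollar]) c \<longleftrightarrow>
    (\<exists>d \<in> {- int (length w - count_list w a) .. int (count_list w a) - int (length w - count_list w a)}.
       c = (3, vmul 2 v (shear (of_int d))))"
proof (induction w arbitrary: v)
  case Nil
  show ?case using assms by (auto simp: nrun_Nil_iff nrun_Cons_iff unequal_nbva_def)
next
  case (Cons x w)
  define p where "p = int (count_list w a)"
  define n where "n = int (length w - count_list w a)"
  have step: "nrun 2 unequal_nbva (Suc a, v) (map Sym (x # w) @ [Dollar]) c \<longleftrightarrow>
      (\<exists>m \<in> (if x = a then {0, 1} else {-1}).
         nrun 2 unequal_nbva (Suc a, vmul 2 v (shear (of_int m))) (map Sym w @ [Dollar]) c)"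
    using assms by (auto simp: nrun_Cons_iff unequal_nbva_def tally_def)
  let ?Q = "\<lambda>d::int. c = (3, vmul 2 v (shear (of_int d)))"
  have IH: "nrun 2 unequal_nbva (Suc a, vmul 2 v (shear (of_int m))) (map Sym w @ [Dollar]) c \<longleftrightarrow>
      (\<exists>d \<in> {- n + m .. p - n + m}. ?Q d)" for m
    unfolding Cons.IH bex_Icc_add[symmetric, where P = ?Q]
    by (simp add: vmul_shear_shear p_def n_def)
  show ?case
  proof (cases "x = a")
    case True
    have "nrun 2 unequal_nbva (Suc a, v) (map Sym (x # w) @ [Dollar]) c \<longleftrightarrow>
        (\<exists>d\<in>{- n..p - n}. ?Q d) \<or> (\<exists>d\<in>{- n + 1..p - n + 1}. ?Q d)"
      unfolding step using True by (simp add: IH)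
    also have "\<dots> \<longleftrightarrow> (\<exists>d\<in>{- n..p - n + 1}. ?Q d)"
      by (rule bex_Icc_Un) (simp add: p_def)
    finally show ?thesis
      using True by (simp add: p_def n_def Suc_diff_le count_le_length algebra_simps)
  next
    case False
    then show ?thesis
      unfolding step using IH[of "- 1"] by (simp add: p_def n_def Suc_diff_le count_le_length algebra_simps)
  qed
qed

lemma unequal_nbva_tally_accepts:
  assumes "a \<in> {0, 1}"
  shows "(\<exists>u. nrun 2 unequal_nbva (Suc a, unit_vect 1) (map Sym w @ [Dollar]) (3, u) \<and> u 0 = 1)
    \<longleftrightarrow> length w - count_list w a < count_list w a"
proof -
  have entry: "vmul 2 (unit_vect 1) (shear x) 0 = x" for x
    by (simp add: vmul_shear unit_vect_def)
  have "(\<exists>u. nrun 2 unequal_nbva (Suc a, unit_vect 1) (map Sym w @ [Dollar]) (3, u) \<and> u 0 = 1)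
    \<longleftrightarrow> (\<exists>d \<in> {- int (length w - count_list w a) .. int (count_list w a) - int (length w - count_list w a)}.
          vmul 2 (unit_vect 1) (shear (of_int d)) 0 = 1)"
    unfolding nrun_tally[OF assms] by auto
  also have "\<dots> \<longleftrightarrow> length w - count_list w a < count_list w a"
    unfolding entry by auto
  finally show ?thesis .
qed

lemma unequal_nbva_accepts:
  assumes "w \<in> lists {0, 1}"
  shows "nbva_accepts 2 unequal_nbva 0 {3} (unit_vect 1) w \<longleftrightarrow> count_list w 0 \<noteq> count_list w 1"
proof -
  have cent: "unequal_nbva 0 Cent = (\<lambda>a. (Suc a, shear 0)) ` {0, 1}"
    by (simp add: unequal_nbva_def numeral_2_eq_2)
  have start: "vmul 2 (unit_vect 1) (shear 0) = unit_vect 1"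
    by (auto simp: vmul_shear unit_vect_def)
  have "nbva_accepts 2 unequal_nbva 0 {3} (unit_vect 1) w \<longleftrightarrow>
      (\<exists>a \<in> {0, 1}. \<exists>u. nrun 2 unequal_nbva (Suc a, vmul 2 (unit_vect 1) (shear 0))
         (map Sym w @ [Dollar]) (3, u) \<and> u 0 = 1)"
    unfolding nbva_accepts_def tape_def nrun_Cons_iff cent by blast
  also have "\<dots> \<longleftrightarrow> (\<exists>a \<in> {0, 1}. length w - count_list w a < count_list w a)"
    unfolding start using unequal_nbva_tally_accepts by blast
  also have "\<dots> \<longleftrightarrow> count_list w 0 \<noteq> count_list w 1"
  proof -
    have "set w \<subseteq> {0, 1}" using assms by auto
    then have "count_list w 0 + count_list w 1 = length w"
      using sum_count_set[of w "{0, 1}"] by simp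
    then show ?thesis by auto
  qed
  finally show ?thesis .
qed

lemma nbva_lang_unequal_counts: "nbva_lang {0, 1} 2 unequal_counts"
  unfolding nbva_lang_def
proof (intro exI conjI)
  show "is_nbva {0, 1} 2 {0..3} unequal_nbva 0 {3}"
    by (auto simp: is_nbva_def tape_syms_def unequal_nbva_def tally_def)
  show "unequal_counts = {w \<in> lists {0, 1}. nbva_accepts 2 unequal_nbva 0 {3} (unit_vect 1) w}"
    unfolding unequal_counts_def using unequal_nbva_accepts by blast
qed

theorem theorem14:
  shows "\<exists>(\<Sigma> :: nat set) L. finite \<Sigma> \<and> L \<subseteq> lists \<Sigma> \<and> nbva_lang \<Sigma> 2 L \<and>
           \<not> (\<exists>k. dbva_lang \<Sigma> k L)"
proof (intro exI conjI)
  show "unequal_counts \<subseteq> lists {0, 1}" by (auto simp: unequal_counts_def)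
  show "nbva_lang {0, 1} 2 unequal_counts" by (rule nbva_lang_unequal_counts)
  show "\<not> (\<exists>k. dbva_lang {0, 1} k unequal_counts)" using not_dbva_lang_unequal_counts by blast
qed simp

end
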